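(* Let $a_1,a_2,a_3\in\mathbb{R}\setminus\{0\}$ and consider the connection $$\nabla=d-\Big(A_1\frac{dz}{z}+A_2\frac{dw}{w}+A_3\frac{d(z-w)}{z-w}\Big),$$ $$A_1=\begin{pmatrix}a_1&0\\ \frac{a_1+a_3-a_2}{2}&0\end{pmatrix},\quad A_2=\begin{pmatrix}0&\frac{a_2+a_3-a_1}{2}\\0&a_2\end{pmatrix},\quad A_3=\begin{pmatrix}\frac{a_2+a_3-a_1}{2}&\frac{a_1-a_2-a_3}{2}\\ \frac{a_2-a_1-a_3}{2}&\frac{a_1+a_3-a_2}{2}\end{pmatrix}$$ on the tangent bundle of $\mathbb{C}^2\setminus(\{z=0\}\cup\{w=0\}\cup\{w=z\})$ (in the frame $\partial_z,\partial_w$). Then $\nabla$ is Dunkl if and only if $|a_i|<|a_j|+|a_k|$ for all $(i,j,k)$ running over cyclic permutations of $(1,2,3)$.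
   Context: A connection of this form is Dunkl if there exists a positive definite Hermitian inner product on $\mathbb{C}^2$ with respect to which each of the residue matrices $A_1,A_2,A_3$ is self-adjoint. *)

theory Defs
  imports "HOL-Analysis.Analysis"
begin

definition pd_hermitian_inner :: "(complex^2 \<Rightarrow> complex^2 \<Rightarrow> complex) \<Rightarrow> bool" where
  "pd_hermitian_inner B \<longleftrightarrow>
     (\<forall>u v w. B (u + v) w = B u w + B v w) \<and>
     (\<forall>c u w. B (c *s u) w = c * B u w) \<and>
     (\<forall>u v. B u v = cnj (B v u)) \<and>
     (\<forall>v. v \<noteq> 0 \<longrightarrow> Re (B v v) > 0)"

definition self_adjoint_wrt :: "(complex^2 \<Rightarrow> complex^2 \<Rightarrow> complex) \<Rightarrow> complex^2^2 \<Rightarrow> bool" where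
  "self_adjoint_wrt B A \<longleftrightarrow> (\<forall>u v. B (A *v u) v = B u (A *v v))"

definition mat2 :: "complex \<Rightarrow> complex \<Rightarrow> complex \<Rightarrow> complex \<Rightarrow> complex^2^2" where
  "mat2 p q r s = (\<chi> i j. if i = 1 then (if j = 1 then p else q) else (if j = 1 then r else s))"

definition resA1 :: "real \<Rightarrow> real \<Rightarrow> real \<Rightarrow> complex^2^2" where
  "resA1 a1 a2 a3 = mat2 (of_real a1) 0 (of_real ((a1 + a3 - a2) / 2)) 0"

definition resA2 :: "real \<Rightarrow> real \<Rightarrow> real \<Rightarrow> complex^2^2" where
  "resA2 a1 a2 a3 = mat2 0 (of_real ((a2 + a3 - a1) / 2)) 0 (of_real a2)"

definition resA3 :: "real \<Rightarrow> real \<Rightarrow> real \<Rightarrow> complex^2^2" where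
  "resA3 a1 a2 a3 = mat2 (of_real ((a2 + a3 - a1) / 2)) (of_real ((a1 - a2 - a3) / 2))
                         (of_real ((a2 - a1 - a3) / 2)) (of_real ((a1 + a3 - a2) / 2))"

definition is_Dunkl :: "complex^2^2 \<Rightarrow> complex^2^2 \<Rightarrow> complex^2^2 \<Rightarrow> bool" where
  "is_Dunkl A1 A2 A3 \<longleftrightarrow> (\<exists>B. pd_hermitian_inner B \<and>
      self_adjoint_wrt B A1 \<and> self_adjoint_wrt B A2 \<and> self_adjoint_wrt B A3)"

end

theory Submission
  imports Defs
begin

text \<open>
  The residues sum to the scalar matrix \<open>(a1 + a2 + a3)/2 \<cdot> I\<close>, so \<open>A3\<close> is self-adjoint as
  soon as \<open>A1\<close> and \<open>A2\<close> are. With \<open>c = (a1 + a3 - a2)/2\<close> and \<open>d = (a2 + a3 - a1)/2\<close>,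
  self-adjointness of \<open>A1\<close> and \<open>A2\<close> says that the real part \<open>[[p, t], [t, r]]\<close> of the Gram
  matrix solves \<open>a1 t + c r = 0\<close> and \<open>d p + a2 t = 0\<close>; conversely every positive definite
  real solution is the Gram matrix of an admissible inner product. Eliminating \<open>p\<close> and \<open>t\<close>,
  a solution exists iff \<open>c d (a1 a2 - c d) > 0\<close>, and \<open>16 c d (a1 a2 - c d)\<close> is Heron's
  product \<open>(a1 + a2 + a3)(-a1 + a2 + a3)(a1 - a2 + a3)(a1 + a2 - a3)\<close>, which depends only
  on the \<open>|ai|\<close> and is positive iff they satisfy the strict triangle inequalities.
\<close>

definition heron_product :: "real \<Rightarrow> real \<Rightarrow> real \<Rightarrow> real" where
  "heron_product x y z = (x + y + z) * (- x + y + z) * (x - y + z) * (x + y - z)"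

lemma heron_product_abs: "heron_product (\<bar>x\<bar>) (\<bar>y\<bar>) (\<bar>z\<bar>) = heron_product x y z"
proof -
  have "heron_product x y z = 2*x^2*y^2 + 2*y^2*z^2 + 2*z^2*x^2 - x^4 - y^4 - z^4" for x y z
    unfolding heron_product_def by (simp add: algebra_simps power2_eq_square power4_eq_xxxx)
  then show ?thesis by simp
qed

lemma heron_product_pos_iff:
  fixes x y z :: real
  assumes "0 < x" "0 < y" "0 < z"
  shows "0 < heron_product x y z \<longleftrightarrow> x < y + z \<and> y < z + x \<and> z < x + y"
proof
  assume pos: "0 < heron_product x y z"
  have s: "0 \<le> x + y + z" using assms by simp
  show "x < y + z \<and> y < z + x \<and> z < x + y"
  proof (rule ccontr)
    assume "\<not> ?thesis"
    then consider "-x+y+z \<le> 0" "x-y+z \<ge> 0" "x+y-z \<ge> 0"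
      | "-x+y+z \<ge> 0" "x-y+z \<le> 0" "x+y-z \<ge> 0"
      | "-x+y+z \<ge> 0" "x-y+z \<ge> 0" "x+y-z \<le> 0"
      using assms by linarith
    then have "heron_product x y z \<le> 0"
      unfolding heron_product_def
      by cases (intro mult_nonpos_nonneg mult_nonneg_nonpos mult_nonneg_nonneg s; assumption)+
    with pos show False by simp
  qed
qed (use assms in \<open>simp add: heron_product_def\<close>)

lemma binary_quadratic_form_pos_def_iff:
  fixes p t r :: real
  shows "(\<forall>x y. (x \<noteq> 0 \<or> y \<noteq> 0) \<longrightarrow> 0 < p * x\<^sup>2 + 2 * t * x * y + r * y\<^sup>2) \<longleftrightarrow>
    0 < p \<and> t\<^sup>2 < p * r"
proof
  assume pos: "\<forall>x y. (x \<noteq> 0 \<or> y \<noteq> 0) \<longrightarrow> 0 < p * x\<^sup>2 + 2 * t * x * y + r * y\<^sup>2"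
  have "0 < p" using pos[rule_format, of 1 0] by simp
  moreover have "0 < p * (p * r - t\<^sup>2)"
    using pos[rule_format, of t "- p"] \<open>0 < p\<close> by (simp add: algebra_simps power2_eq_square)
  ultimately show "0 < p \<and> t\<^sup>2 < p * r" by (simp add: zero_less_mult_iff)
next
  assume pr: "0 < p \<and> t\<^sup>2 < p * r"
  show "\<forall>x y. (x \<noteq> 0 \<or> y \<noteq> 0) \<longrightarrow> 0 < p * x\<^sup>2 + 2 * t * x * y + r * y\<^sup>2"
  proof (intro allI impI)
    fix x y :: real
    assume "x \<noteq> 0 \<or> y \<noteq> 0"
    then have "0 < (p * x + t * y)\<^sup>2 + (p * r - t\<^sup>2) * y\<^sup>2"
      using pr by (cases "y = 0") (auto intro: add_nonneg_pos add_pos_nonneg)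
    also have "\<dots> = p * (p * x\<^sup>2 + 2 * t * x * y + r * y\<^sup>2)"
      by (simp add: algebra_simps power2_eq_square)
    finally show "0 < p * x\<^sup>2 + 2 * t * x * y + r * y\<^sup>2"
      using pr by (simp add: zero_less_mult_iff)
  qed
qed

lemma mat2_mult: "mat2 p q r s *v u = vector [p * u$1 + q * u$2, r * u$1 + s * u$2]"
  by (simp add: vec_eq_iff forall_2 mat2_def matrix_vector_mult_def sum_2)

abbreviation e1 :: "complex^2" where "e1 \<equiv> vector [1, 0]"
abbreviation e2 :: "complex^2" where "e2 \<equiv> vector [0, 1]"

context
  fixes B :: "complex^2 \<Rightarrow> complex^2 \<Rightarrow> complex"
  assumes B: "pd_hermitian_inner B"
begin

lemma pd_hermitian_inner_add_left: "B (u + v) w = B u w + B v w"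
  and pd_hermitian_inner_scale_left: "B (c *s u) w = c * B u w"
  and pd_hermitian_inner_commute: "B u v = cnj (B v u)"
  and pd_hermitian_inner_pos: "v \<noteq> 0 \<Longrightarrow> 0 < Re (B v v)"
  using B unfolding pd_hermitian_inner_def by blast+

lemma pd_hermitian_inner_add_right: "B u (v + w) = B u v + B u w"
  by (metis pd_hermitian_inner_add_left pd_hermitian_inner_commute complex_cnj_add)

lemma pd_hermitian_inner_scale_right: "B u (c *s v) = cnj c * B u v"
  by (metis pd_hermitian_inner_scale_left pd_hermitian_inner_commute complex_cnj_mult)

lemma pd_hermitian_inner_diff_left: "B (u - v) w = B u w - B v w"
  by (metis pd_hermitian_inner_add_left eq_diff_eq)

lemma pd_hermitian_inner_diff_right: "B u (v - w) = B u v - B u w"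
  by (metis pd_hermitian_inner_add_right eq_diff_eq)

lemma self_adjoint_wrt_complement:
  assumes A: "self_adjoint_wrt B A" and C: "self_adjoint_wrt B C"
    and D: "\<And>u. D *v u = complex_of_real k *s u - A *v u - C *v u"
  shows "self_adjoint_wrt B D"
  unfolding self_adjoint_wrt_def
proof (intro allI)
  fix u v
  have "B (D *v u) v = of_real k * B u v - B (A *v u) v - B (C *v u) v"
    unfolding D pd_hermitian_inner_diff_left pd_hermitian_inner_scale_left ..
  also have "\<dots> = cnj (of_real k) * B u v - B u (A *v v) - B u (C *v v)"
    using A C unfolding self_adjoint_wrt_def by simp
  also have "\<dots> = B u (D *v v)"
    unfolding D pd_hermitian_inner_diff_right pd_hermitian_inner_scale_right ..
  finally show "B (D *v u) v = B u (D *v v)" .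
qed

lemma pd_hermitian_inner_gram:
  "B u v = u$1 * cnj (v$1) * B e1 e1 + u$1 * cnj (v$2) * B e1 e2
         + u$2 * cnj (v$1) * B e2 e1 + u$2 * cnj (v$2) * B e2 e2"
proof -
  have decomp: "x = x$1 *s e1 + x$2 *s e2" for x :: "complex^2"
    by (simp add: vec_eq_iff forall_2)
  show ?thesis
    by (subst decomp[of u], subst decomp[of v])
      (simp add: pd_hermitian_inner_add_left pd_hermitian_inner_add_right
        pd_hermitian_inner_scale_left pd_hermitian_inner_scale_right algebra_simps)
qed

lemma pd_hermitian_inner_Re_gram_pos_def:
  "0 < Re (B e1 e1) \<and> (Re (B e1 e2))\<^sup>2 < Re (B e1 e1) * Re (B e2 e2)"
proof -
  have "0 < Re (B e1 e1) * x\<^sup>2 + 2 * Re (B e1 e2) * x * y + Re (B e2 e2) * y\<^sup>2"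
    if "x \<noteq> 0 \<or> y \<noteq> 0" for x y :: real
  proof -
    let ?v = "vector [complex_of_real x, complex_of_real y] :: complex^2"
    have "?v \<noteq> 0"
      using that by (auto simp: vec_eq_iff forall_2)
    then have "0 < Re (B ?v ?v)"
      by (rule pd_hermitian_inner_pos)
    also have "Re (B ?v ?v) =
        Re (B e1 e1) * x\<^sup>2 + 2 * Re (B e1 e2) * x * y + Re (B e2 e2) * y\<^sup>2"
      by (subst pd_hermitian_inner_gram, subst pd_hermitian_inner_commute[of e2 e1])
        (simp add: algebra_simps power2_eq_square)
    finally show ?thesis .
  qed
  then show ?thesis
    using binary_quadratic_form_pos_def_iff by blast
qed

lemma self_adjoint_wrt_mat2_Re_gram:
  fixes \<alpha> \<beta> \<gamma> \<delta> :: real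
  assumes "self_adjoint_wrt B (mat2 (of_real \<alpha>) (of_real \<beta>) (of_real \<gamma>) (of_real \<delta>))"
  shows "\<alpha> * Re (B e1 e2) + \<gamma> * Re (B e2 e2) = \<beta> * Re (B e1 e1) + \<delta> * Re (B e1 e2)"
proof -
  have "B (mat2 (of_real \<alpha>) (of_real \<beta>) (of_real \<gamma>) (of_real \<delta>) *v e1) e2 =
      B e1 (mat2 (of_real \<alpha>) (of_real \<beta>) (of_real \<gamma>) (of_real \<delta>) *v e2)"
    using assms unfolding self_adjoint_wrt_def by blast
  then have "Re (B (vector [of_real \<alpha>, of_real \<gamma>]) e2) =
      Re (B e1 (vector [of_real \<beta>, of_real \<delta>]))"
    by (simp add: mat2_mult)
  then show ?thesis
    by (subst (asm) (1 2) pd_hermitian_inner_gram) simp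
qed

end

definition gram_form :: "real \<Rightarrow> real \<Rightarrow> real \<Rightarrow> complex^2 \<Rightarrow> complex^2 \<Rightarrow> complex" where
  "gram_form p t r u v = u$1 * cnj (v$1) * of_real p + u$1 * cnj (v$2) * of_real t
                       + u$2 * cnj (v$1) * of_real t + u$2 * cnj (v$2) * of_real r"

lemma pd_hermitian_inner_gram_form:
  assumes "0 < p" "t\<^sup>2 < p * r"
  shows "pd_hermitian_inner (gram_form p t r)"
  unfolding pd_hermitian_inner_def
proof (intro conjI allI impI)
  fix v :: "complex^2"
  assume "v \<noteq> 0"
  let ?Q = "\<lambda>x y. p * x\<^sup>2 + 2 * t * x * y + r * y\<^sup>2"
  have Q: "(x \<noteq> 0 \<or> y \<noteq> 0) \<longrightarrow> 0 < ?Q x y" for x y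
    using assms binary_quadratic_form_pos_def_iff by blast
  have "Re (v$1) \<noteq> 0 \<or> Re (v$2) \<noteq> 0 \<or> Im (v$1) \<noteq> 0 \<or> Im (v$2) \<noteq> 0"
    using \<open>v \<noteq> 0\<close> by (auto simp: vec_eq_iff forall_2 complex_eq_iff)
  moreover have "0 \<le> ?Q x y" for x y
    using Q[of x y] by (cases "x = 0 \<and> y = 0") auto
  ultimately have "0 < ?Q (Re (v$1)) (Re (v$2)) + ?Q (Im (v$1)) (Im (v$2))"
    using Q by (meson add_nonneg_pos add_pos_nonneg)
  also have "\<dots> = Re (gram_form p t r v v)"
    unfolding gram_form_def by (simp add: algebra_simps power2_eq_square)
  finally show "0 < Re (gram_form p t r v v)" .
qed (simp_all add: gram_form_def algebra_simps)

lemma self_adjoint_wrt_gram_form_mat2: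
  fixes \<alpha> \<beta> \<gamma> \<delta> :: real
  assumes "\<alpha> * t + \<gamma> * r = \<beta> * p + \<delta> * t"
  shows "self_adjoint_wrt (gram_form p t r)
    (mat2 (of_real \<alpha>) (of_real \<beta>) (of_real \<gamma>) (of_real \<delta>))"
  unfolding self_adjoint_wrt_def
proof (intro allI)
  fix u v :: "complex^2"
  let ?M = "mat2 (of_real \<alpha>) (of_real \<beta>) (of_real \<gamma>) (of_real \<delta>)"
  have "gram_form p t r (?M *v u) v - gram_form p t r u (?M *v v)
     = (u$1 * cnj (v$2) - u$2 * cnj (v$1)) * of_real ((\<alpha> * t + \<gamma> * r) - (\<beta> * p + \<delta> * t))"
    unfolding gram_form_def mat2_mult by (simp add: algebra_simps)
  then show "gram_form p t r (?M *v u) v = gram_form p t r u (?M *v v)"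
    using assms by simp
qed

lemma compatible_gram_exists_iff:
  fixes a1 a2 c d :: real
  assumes "a1 \<noteq> 0" "a2 \<noteq> 0" "c + d \<noteq> 0"
  shows "(\<exists>p t r. 0 < p \<and> t\<^sup>2 < p * r \<and> a1 * t + c * r = 0 \<and> d * p + a2 * t = 0) \<longleftrightarrow>
    0 < c * d * (a1 * a2 - c * d)"
proof
  assume "\<exists>p t r. 0 < p \<and> t\<^sup>2 < p * r \<and> a1 * t + c * r = 0 \<and> d * p + a2 * t = 0"
  then obtain p t r where "0 < p" "t\<^sup>2 < p * r"
    and eq1: "a1 * t + c * r = 0" and eq2: "d * p + a2 * t = 0"
    by blast
  then have "0 < r"
    by (smt (verit) zero_le_power2 zero_less_mult_iff)
  have "d \<noteq> 0"
  proof
    assume "d = 0"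
    then have "c = 0"
      using eq1 eq2 \<open>a2 \<noteq> 0\<close> \<open>0 < r\<close> by simp
    with \<open>d = 0\<close> \<open>c + d \<noteq> 0\<close> show False by simp
  qed
  have "0 < a1\<^sup>2 * d\<^sup>2 * (p * r - t\<^sup>2)"
    using \<open>t\<^sup>2 < p * r\<close> \<open>a1 \<noteq> 0\<close> \<open>d \<noteq> 0\<close> by simp
  also have "a1\<^sup>2 * d\<^sup>2 * (p * r - t\<^sup>2) = r\<^sup>2 * (c * d * (a1 * a2 - c * d))"
    using eq1 eq2 by algebra
  finally show "0 < c * d * (a1 * a2 - c * d)"
    by (simp add: zero_less_mult_iff)
next
  assume K: "0 < c * d * (a1 * a2 - c * d)"
  then have "d \<noteq> 0" by auto
  define t where "t = - c / a1"
  define p where "p = a2 * c / (a1 * d)"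
  have "p - t\<^sup>2 = c * d * (a1 * a2 - c * d) / (a1\<^sup>2 * d\<^sup>2)"
    unfolding p_def t_def using \<open>a1 \<noteq> 0\<close> \<open>d \<noteq> 0\<close> by (simp add: field_simps power2_eq_square)
  also have "\<dots> > 0"
    using K \<open>a1 \<noteq> 0\<close> \<open>d \<noteq> 0\<close> by simp
  finally have "t\<^sup>2 < p * 1" by simp
  moreover have "0 < p"
    using \<open>t\<^sup>2 < p * 1\<close> by (smt (verit) zero_le_power2)
  moreover have "a1 * t + c * 1 = 0" "d * p + a2 * t = 0"
    unfolding p_def t_def using \<open>a1 \<noteq> 0\<close> \<open>d \<noteq> 0\<close> by (simp_all add: field_simps)
  ultimately show "\<exists>p t r. 0 < p \<and> t\<^sup>2 < p * r \<and> a1 * t + c * r = 0 \<and> d * p + a2 * t = 0"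
    by blast
qed

lemma resA3_eq_scalar_minus:
  "resA3 a1 a2 a3 *v u =
     complex_of_real ((a1 + a2 + a3) / 2) *s u - resA1 a1 a2 a3 *v u - resA2 a1 a2 a3 *v u"
  unfolding resA1_def resA2_def resA3_def mat2_mult
  by (simp add: vec_eq_iff forall_2 field_simps)

lemma is_Dunkl_residues_iff:
  fixes a1 a2 a3 :: real
  defines "c \<equiv> (a1 + a3 - a2) / 2" and "d \<equiv> (a2 + a3 - a1) / 2"
  shows "is_Dunkl (resA1 a1 a2 a3) (resA2 a1 a2 a3) (resA3 a1 a2 a3) \<longleftrightarrow>
    (\<exists>p t r. 0 < p \<and> t\<^sup>2 < p * r \<and> a1 * t + c * r = 0 \<and> d * p + a2 * t = 0)"
    (is "_ \<longleftrightarrow> ?solvable")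
proof -
  have A1: "resA1 a1 a2 a3 = mat2 (of_real a1) (of_real 0) (of_real c) (of_real 0)"
    and A2: "resA2 a1 a2 a3 = mat2 (of_real 0) (of_real d) (of_real 0) (of_real a2)"
    by (simp_all add: resA1_def resA2_def c_def d_def)
  have "is_Dunkl (resA1 a1 a2 a3) (resA2 a1 a2 a3) (resA3 a1 a2 a3) \<longleftrightarrow>
    (\<exists>B. pd_hermitian_inner B \<and> self_adjoint_wrt B (resA1 a1 a2 a3) \<and>
      self_adjoint_wrt B (resA2 a1 a2 a3))" (is "_ \<longleftrightarrow> ?admissible")
    unfolding is_Dunkl_def
    using self_adjoint_wrt_complement[OF _ _ _ resA3_eq_scalar_minus] by blast
  also have "?admissible \<longleftrightarrow> ?solvable"
  proof
    assume ?admissible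
    then obtain B where B: "pd_hermitian_inner B"
      and A1_sa: "self_adjoint_wrt B (resA1 a1 a2 a3)"
      and A2_sa: "self_adjoint_wrt B (resA2 a1 a2 a3)"
      by blast
    have "a1 * Re (B e1 e2) + c * Re (B e2 e2) = 0 * Re (B e1 e1) + 0 * Re (B e1 e2)"
      "0 * Re (B e1 e2) + 0 * Re (B e2 e2) = d * Re (B e1 e1) + a2 * Re (B e1 e2)"
      using self_adjoint_wrt_mat2_Re_gram[OF B A1_sa[unfolded A1]]
        self_adjoint_wrt_mat2_Re_gram[OF B A2_sa[unfolded A2]] .
    with pd_hermitian_inner_Re_gram_pos_def[OF B] show ?solvable
      by (metis add_0 mult_zero_left)
  next
    assume ?solvable
    then obtain p t r where "0 < p" "t\<^sup>2 < p * r" "a1 * t + c * r = 0" "d * p + a2 * t = 0"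
      by blast
    then have "pd_hermitian_inner (gram_form p t r)"
      "self_adjoint_wrt (gram_form p t r) (resA1 a1 a2 a3)"
      "self_adjoint_wrt (gram_form p t r) (resA2 a1 a2 a3)"
      unfolding A1 A2
      by (simp_all only: pd_hermitian_inner_gram_form self_adjoint_wrt_gram_form_mat2
          mult_zero_left add_0)
    then show ?admissible
      by blast
  qed
  finally show ?thesis .
qed

theorem lemma27:
  fixes a1 a2 a3 :: real
  assumes "a1 \<noteq> 0" and "a2 \<noteq> 0" and "a3 \<noteq> 0"
  shows "is_Dunkl (resA1 a1 a2 a3) (resA2 a1 a2 a3) (resA3 a1 a2 a3) \<longleftrightarrow>
    (\<bar>a1\<bar> < \<bar>a2\<bar> + \<bar>a3\<bar> \<and> \<bar>a2\<bar> < \<bar>a3\<bar> + \<bar>a1\<bar> \<and> \<bar>a3\<bar> < \<bar>a1\<bar> + \<bar>a2\<bar>)"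
proof -
  define c where "c = (a1 + a3 - a2) / 2"
  define d where "d = (a2 + a3 - a1) / 2"
  have "c + d = a3"
    and heron: "heron_product a1 a2 a3 = 16 * (c * d * (a1 * a2 - c * d))"
    unfolding c_def d_def heron_product_def by (simp_all add: field_simps)
  have "is_Dunkl (resA1 a1 a2 a3) (resA2 a1 a2 a3) (resA3 a1 a2 a3) \<longleftrightarrow>
      0 < c * d * (a1 * a2 - c * d)"
    unfolding is_Dunkl_residues_iff c_def[symmetric] d_def[symmetric]
    using compatible_gram_exists_iff assms \<open>c + d = a3\<close> by blast
  also have "\<dots> \<longleftrightarrow> 0 < heron_product (\<bar>a1\<bar>) (\<bar>a2\<bar>) (\<bar>a3\<bar>)"
    unfolding heron_product_abs heron by (simp add: mult.assoc)
  also have "\<dots> \<longleftrightarrow> \<bar>a1\<bar> < \<bar>a2\<bar> + \<bar>a3\<bar> \<and> \<bar>a2\<bar> < \<bar>a3\<bar> + \<bar>a1\<bar> \<and> \<bar>a3\<bar> < \<bar>a1\<bar> + \<bar>a2\<bar>"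
    using assms by (intro heron_product_pos_iff) auto
  finally show ?thesis .
qed

end
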